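(* Suppose the noise condition $\mathbb P_X(0<\Delta(X)\le\delta)\le(\gamma\delta/B)^\alpha$ for all $\delta>0$ holds for some $\alpha,\gamma\ge0$, and suppose that, for universal constants $C_1,C_2$ and a sequence $a_n>0$, the (data-dependent) estimator $\hat f$ satisfies, for every $\delta>0$ and almost every $x$, $$\mathbb P(\|\hat{f}(x) - f^*(x)\|\ge \delta)\le C_1 \exp(- C_2 a_n \delta^2).$$ Then, for a constant $C(\alpha,\gamma)$ depending only on $\alpha,\gamma$, $$\mathrm{Regret}(\pi_{\hat{f}}) \le C(\alpha, \gamma)\, B\, a_n^{-\frac{1+\alpha}{2}}.$$
   Context: Setting: $X\in\mathbb R^p$, $Y\in\mathbb R^d$ with $\|Y\|\le1$, $f^*(x)=\mathbb E[Y\mid X=x]$. $\mathcal Z=\{z:Az\le b\}$ is a polytope with $\sup_{z\in\mathcal Z}\|z\|\le B$ and finite set of extreme points $\mathcal Z^\angle$; $\mathcal Z^*(x)=\arg\min_{z\in\mathcal Z}f^*(x)^\top z$, $\pi^*(x)\in\mathcal Z^*(x)$; $\Delta(x)=\inf_{z\in\mathcal Z^\angle\setminus\mathcal Z^*(x)}f^*(x)^\top z-\inf_{z\in\mathcal Z}f^*(x)^\top z$ if $\mathcal Z^*(x)\ne\mathcal Z$, else $0$. Data $\mathcal D$ are $n$ i.i.d. draws of $(X,Y)$; $\mathrm{Regret}(\hat\pi)=\mathbb E_{\mathcal D}\mathbb E_X[f^*(X)^\top(\hat\pi(X)-\pi^*(X))]$, $X$ an independent new draw. For $f$, the plug-in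 policy $\pi_f(x)\in\arg\min_{z\in\mathcal Z}f(x)^\top z$ is chosen in $\mathcal Z^\angle$ with ties broken by a fixed ordering of $\mathcal Z^\angle$. *)

theory Defs
  imports "HOL-Probability.Probability"
begin

text \<open>Vectors of R^k are represented as functions nat => real vanishing from index k on,
  so that the dimensions p, d are ordinary values (and the constant of the theorem can be
  chosen independently of them).\<close>

definition vspace :: "nat \<Rightarrow> (nat \<Rightarrow> real) set" where
  "vspace k = {v. \<forall>i\<ge>k. v i = 0}"

definition ip :: "nat \<Rightarrow> (nat \<Rightarrow> real) \<Rightarrow> (nat \<Rightarrow> real) \<Rightarrow> real" where
  "ip d u v = (\<Sum>i<d. u i * v i)"

definition nrm :: "nat \<Rightarrow> (nat \<Rightarrow> real) \<Rightarrow> real" where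
  "nrm d v = sqrt (\<Sum>i<d. (v i)^2)"

definition polytope :: "nat \<Rightarrow> nat \<Rightarrow> (nat \<Rightarrow> nat \<Rightarrow> real) \<Rightarrow> (nat \<Rightarrow> real) \<Rightarrow> (nat \<Rightarrow> real) set" where
  "polytope d m A b = {z \<in> vspace d. \<forall>j<m. (\<Sum>i<d. A j i * z i) \<le> b j}"

definition extreme_pts :: "(nat \<Rightarrow> real) set \<Rightarrow> (nat \<Rightarrow> real) set" where
  "extreme_pts Z = {z \<in> Z. \<forall>u\<in>Z. \<forall>v\<in>Z. \<forall>t::real.
      0 < t \<and> t < 1 \<and> z = (\<lambda>i. t * u i + (1 - t) * v i) \<longrightarrow> u = v}"

definition optval :: "nat \<Rightarrow> (nat \<Rightarrow> real) set \<Rightarrow> (nat \<Rightarrow> real) \<Rightarrow> real" where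
  "optval d Z c = Inf ((\<lambda>z. ip d c z) ` Z)"

definition opt_set :: "nat \<Rightarrow> (nat \<Rightarrow> real) set \<Rightarrow> (nat \<Rightarrow> real) \<Rightarrow> (nat \<Rightarrow> real) set" where
  "opt_set d Z c = {z \<in> Z. \<forall>z'\<in>Z. ip d c z \<le> ip d c z'}"

text \<open>The gap Delta (evaluated at c = f*(x)).\<close>
definition gap :: "nat \<Rightarrow> (nat \<Rightarrow> real) set \<Rightarrow> (nat \<Rightarrow> real) \<Rightarrow> real" where
  "gap d Z c = (if opt_set d Z c \<noteq> Z
      then Inf ((\<lambda>z. ip d c z) ` (extreme_pts Z - opt_set d Z c)) - optval d Z c
      else 0)"

definition plugin :: "nat \<Rightarrow> (nat \<Rightarrow> real) set \<Rightarrow> (nat \<Rightarrow> real) list \<Rightarrow> (nat \<Rightarrow> real) \<Rightarrow> (nat \<Rightarrow> real)" where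
  "plugin d Z zs c = hd (filter (\<lambda>z. z \<in> opt_set d Z c) zs)"

text \<open>g is (a version of) E[Y | X = x], where M is the joint law of (X,Y).\<close>
definition is_cond_exp_Y :: "nat \<Rightarrow> ((nat \<Rightarrow> real) \<times> (nat \<Rightarrow> real)) measure
    \<Rightarrow> ((nat \<Rightarrow> real) \<Rightarrow> (nat \<Rightarrow> real)) \<Rightarrow> bool" where
  "is_cond_exp_Y d M g \<longleftrightarrow>
     g \<in> borel \<rightarrow>\<^sub>M borel \<and> (\<forall>x. g x \<in> vspace d) \<and>
     (\<forall>i<d. integrable (distr M borel fst) (\<lambda>x. g x i)) \<and>
     (\<forall>i<d. \<forall>A\<in>sets borel.
        (\<integral>xy. indicator A (fst xy) * snd xy i \<partial>M) = (\<integral>x. indicator A x * g x i \<partial>(distr M borel fst)))"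

text \<open>Right-hand side (gamma delta / B)^alpha of the noise condition, with 0^0 = 1.\<close>
definition noise_rhs :: "real \<Rightarrow> real \<Rightarrow> real \<Rightarrow> real \<Rightarrow> real" where
  "noise_rhs \<alpha> \<gamma> B \<delta> = (if \<alpha> = 0 then 1 else (\<gamma> * \<delta> / B) powr \<alpha>)"

end

theory Submission
  imports Defs "HOL-Real_Asymp.Real_Asymp"
begin

(* Let h > 0 be the excess cost, under f*(x), of the plug-in decision for fhat(x).  Optimality of
   that decision for fhat(x) and Cauchy-Schwarz give h <= 2B ||fhat(x) - f*(x)||, and since the
   decision is an extreme point whose cost exceeds the optimum by h, 0 < Delta(x) <= h.  Peeling
   ||fhat(x) - f*(x)|| into shells [k u, (k+1) u) with u = (C2 a)^(-1/2), shell k contributes at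
   most 2B(k+1)u * max(1, C1) e^(-k^2) * P(0 < Delta <= 2B(k+1)u), which by the noise condition is
   a multiple of B u^(1+alpha) (k+1)^(1+alpha) e^(-k^2); the series in k converges, and
   u^(1+alpha) is the rate a^(-(1+alpha)/2).
   For every point of the bounded polytope some extreme point costs no more: move along a
   direction that keeps the tight constraints tight until one more becomes tight.  This makes the
   plug-in decision well defined and turns {0 < Delta <= delta} into a finite Boolean combination
   of linear inequalities, so no measurability of Delta is needed. *)

section \<open>Extreme points of bounded polytopes\<close>

lemma ip_add_scaled: "ip d c (\<lambda>i. x i + s * y i) = ip d c x + s * ip d c y"
  unfolding ip_def by (simp add: algebra_simps sum.distrib sum_distrib_left)

lemma ip_convex_comb: "ip d c (\<lambda>i. t * u i + (1 - t) * v i) = t * ip d c u + (1 - t) * ip d c v"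
  unfolding ip_def sum_distrib_left sum.distrib[symmetric] by (rule sum.cong) (auto simp: algebra_simps)

lemma ip_uminus_left: "ip d (\<lambda>i. - c i) z = - ip d c z"
  unfolding ip_def by (simp add: sum_negf)

lemma ip_diff_right: "ip d c (u - v) = ip d c u - ip d c v"
  unfolding ip_def by (simp add: algebra_simps sum_subtractf)

lemma nrm_eq_L2_set: "nrm d v = L2_set v {..<d}"
  unfolding nrm_def L2_set_def ..

lemma nrm_nonneg: "0 \<le> nrm d v"
  by (simp add: nrm_eq_L2_set)

lemma abs_le_nrm: "i < d \<Longrightarrow> \<bar>v i\<bar> \<le> nrm d v"
  using member_le_L2_set[of "{..<d}" i "\<lambda>i. \<bar>v i\<bar>"] by (simp add: nrm_eq_L2_set L2_set_def)

lemma ip_le_nrm_mult: "ip d u v \<le> nrm d u * nrm d v"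
proof -
  have "ip d u v \<le> (\<Sum>i<d. \<bar>u i\<bar> * \<bar>v i\<bar>)"
    unfolding ip_def by (intro sum_mono) (metis abs_ge_self abs_mult)
  also have "\<dots> \<le> nrm d u * nrm d v"
    unfolding nrm_eq_L2_set by (rule L2_set_mult_ineq)
  finally show ?thesis .
qed

lemma nrm_diff_le: "nrm d (u - v) \<le> nrm d u + nrm d v"
  using L2_set_triangle_ineq[of u "\<lambda>i. - v i" "{..<d}"] by (simp add: nrm_eq_L2_set L2_set_def)

lemma nrm_diff_commute: "nrm d (u - v) = nrm d (v - u)"
  by (simp add: nrm_def power2_commute)

lemma mem_polytope_iff: "z \<in> polytope d m A b \<longleftrightarrow> z \<in> vspace d \<and> (\<forall>j<m. ip d (A j) z \<le> b j)"
  unfolding polytope_def ip_def by simp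

definition slack_constraints ::
    "nat \<Rightarrow> nat \<Rightarrow> (nat \<Rightarrow> nat \<Rightarrow> real) \<Rightarrow> (nat \<Rightarrow> real) \<Rightarrow> (nat \<Rightarrow> real) \<Rightarrow> nat set" where
  "slack_constraints d m A b z = {j. j < m \<and> ip d (A j) z < b j}"

lemma nonextreme_descent_direction:
  assumes z: "z \<in> polytope d m A b" and "z \<notin> extreme_pts (polytope d m A b)"
  obtains w i0 where "w \<in> vspace d" "i0 < d" "w i0 \<noteq> 0" "ip d c w \<le> 0"
    "\<And>j. j < m \<Longrightarrow> ip d (A j) z = b j \<Longrightarrow> ip d (A j) w = 0"
proof -
  obtain u v t where u: "u \<in> polytope d m A b" and v: "v \<in> polytope d m A b"
    and t: "0 < t" "t < 1" and z_eq: "z = (\<lambda>i. t * u i + (1 - t) * v i)" and "u \<noteq> v"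
    using assms unfolding extreme_pts_def by blast
  have uv: "u \<in> vspace d" "v \<in> vspace d" using u v by (simp_all add: mem_polytope_iff)
  have "\<exists>i<d. u i \<noteq> v i"
  proof (rule ccontr)
    assume "\<not> ?thesis"
    then have "u i = v i" for i
      using uv unfolding vspace_def by (cases "i < d") auto
    then show False using \<open>u \<noteq> v\<close> by auto
  qed
  then obtain i0 where i0: "i0 < d" "u i0 \<noteq> v i0" by blast
  have tight: "ip d (A j) (u - v) = 0" if "j < m" "ip d (A j) z = b j" for j
  proof -
    have "ip d (A j) u \<le> b j" "ip d (A j) v \<le> b j"
      using u v \<open>j < m\<close> by (simp_all add: mem_polytope_iff)
    moreover have "t * (b j - ip d (A j) u) + (1 - t) * (b j - ip d (A j) v) = 0"
      using that(2) unfolding z_eq ip_convex_comb by (simp add: algebra_simps)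
    ultimately have "t * (b j - ip d (A j) u) = 0" "(1 - t) * (b j - ip d (A j) v) = 0"
      using t add_nonneg_eq_0_iff[of "t * (b j - ip d (A j) u)" "(1 - t) * (b j - ip d (A j) v)"]
      by simp_all
    then have "ip d (A j) u = b j" "ip d (A j) v = b j" using t by simp_all
    then show ?thesis by (simp add: ip_diff_right)
  qed
  define w where "w = (if ip d c (u - v) \<le> 0 then u - v else v - u)"
  have "w \<in> vspace d" using uv unfolding w_def vspace_def by simp
  moreover have "w i0 \<noteq> 0" using i0 unfolding w_def by simp
  moreover have "ip d c w \<le> 0"
    unfolding w_def by (simp add: ip_diff_right)
  moreover have "ip d (A j) w = 0" if "j < m" "ip d (A j) z = b j" for j
    using tight[OF that] unfolding w_def by (simp add: ip_diff_right)
  ultimately show ?thesis using that i0(1) by blast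
qed

lemma bounded_polytope_exit_constraint:
  assumes bounded: "\<forall>z\<in>polytope d m A b. nrm d z \<le> B" and z: "z \<in> polytope d m A b"
    and w: "w \<in> vspace d" "i0 < d" "w i0 \<noteq> 0"
  shows "\<exists>j<m. 0 < ip d (A j) w"
proof (rule ccontr)
  assume "\<not> ?thesis"
  then have nonpos: "ip d (A j) w \<le> 0" if "j < m" for j
    using that by (meson not_le)
  define s where "s = (B + \<bar>z i0\<bar> + 1) / \<bar>w i0\<bar>"
  have "\<bar>z i0\<bar> \<le> B" using bounded z abs_le_nrm[OF w(2), of z] by fastforce
  then have s: "0 \<le> s" "\<bar>s * w i0\<bar> = B + \<bar>z i0\<bar> + 1"
    using w(3) unfolding s_def by (simp_all add: abs_mult)
  have "ip d (A j) z + s * ip d (A j) w \<le> b j" if "j < m" for j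
    using z nonpos[OF that] s(1) that mult_nonneg_nonpos[of s "ip d (A j) w"]
    by (force simp: mem_polytope_iff)
  then have "(\<lambda>i. z i + s * w i) \<in> polytope d m A b"
    using z w(1) by (auto simp: mem_polytope_iff ip_add_scaled vspace_def)
  then have "\<bar>z i0 + s * w i0\<bar> \<le> B"
    using bounded abs_le_nrm[OF w(2), of "\<lambda>i. z i + s * w i"] by fastforce
  then show False using s(2) by linarith
qed

lemma polytope_move_to_facet:
  assumes z: "z \<in> polytope d m A b" and w: "w \<in> vspace d"
    and tight: "\<And>j. j < m \<Longrightarrow> ip d (A j) z = b j \<Longrightarrow> ip d (A j) w = 0"
    and j0: "j0 < m" "0 < ip d (A j0) w"
  obtains s where "0 \<le> s" "(\<lambda>i. z i + s * w i) \<in> polytope d m A b"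
    "slack_constraints d m A b (\<lambda>i. z i + s * w i) \<subset> slack_constraints d m A b z"
proof -
  define J where "J = {j. j < m \<and> 0 < ip d (A j) w}"
  define ratio where "ratio j = (b j - ip d (A j) z) / ip d (A j) w" for j
  define s where "s = Min (ratio ` J)"
  have J: "finite J" "j0 \<in> J" using j0 by (auto simp: J_def)
  then have "s \<in> ratio ` J"
    unfolding s_def by (intro Min_in) auto
  then obtain j1 where j1: "j1 \<in> J" "s = ratio j1" by blast
  have s_le: "s \<le> ratio j" if "j \<in> J" for j
    using J that unfolding s_def by simp
  have feasible: "ip d (A j) z \<le> b j" if "j < m" for j
    using z that by (simp add: mem_polytope_iff)
  have j1_pos: "j1 < m" "0 < ip d (A j1) w" using j1(1) by (simp_all add: J_def)
  have s_nonneg: "0 \<le> s"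
    using j1 j1_pos feasible[of j1] unfolding ratio_def by simp
  define z' where "z' = (\<lambda>i. z i + s * w i)"
  have step: "ip d (A j) z' = ip d (A j) z + s * ip d (A j) w" for j
    unfolding z'_def by (rule ip_add_scaled)
  have "ip d (A j) z' \<le> b j" if "j < m" for j
  proof (cases "j \<in> J")
    case True
    then have "s * ip d (A j) w \<le> b j - ip d (A j) z"
      using s_le[OF True] by (simp add: J_def ratio_def pos_le_divide_eq)
    then show ?thesis by (simp add: step)
  next
    case False
    then have "s * ip d (A j) w \<le> 0"
      using that s_nonneg by (simp add: J_def mult_nonneg_nonpos)
    then show ?thesis using feasible[OF that] by (simp add: step)
  qed
  then have "z' \<in> polytope d m A b"
    using z w by (auto simp: mem_polytope_iff vspace_def z'_def)
  moreover have "slack_constraints d m A b z' \<subseteq> slack_constraints d m A b z"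
    using tight feasible by (force simp: slack_constraints_def step)
  moreover have "j1 \<in> slack_constraints d m A b z" "j1 \<notin> slack_constraints d m A b z'"
    using j1_pos tight[of j1] feasible[of j1]
    by (auto simp: slack_constraints_def step j1(2) ratio_def order.strict_iff_order)
  ultimately show ?thesis
    using that s_nonneg unfolding z'_def by blast
qed

lemma polytope_extreme_point_le:
  assumes bounded: "\<forall>z\<in>polytope d m A b. nrm d z \<le> B" and "z \<in> polytope d m A b"
  shows "\<exists>e\<in>extreme_pts (polytope d m A b). ip d c e \<le> ip d c z"
  using assms(2)
proof (induction "card (slack_constraints d m A b z)" arbitrary: z rule: less_induct)
  case less
  show ?case
  proof (cases "z \<in> extreme_pts (polytope d m A b)")
    case True
    then show ?thesis by blast
  next
    case False
    obtain w i0 where w: "w \<in> vspace d" "i0 < d" "w i0 \<noteq> 0" "ip d c w \<le> 0"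
      and tight: "\<And>j. j < m \<Longrightarrow> ip d (A j) z = b j \<Longrightarrow> ip d (A j) w = 0"
      using nonextreme_descent_direction[OF less.prems False] by blast
    obtain j0 where "j0 < m" "0 < ip d (A j0) w"
      using bounded_polytope_exit_constraint[OF bounded less.prems w(1-3)] by blast
    then obtain s where s: "0 \<le> s" "(\<lambda>i. z i + s * w i) \<in> polytope d m A b"
      "slack_constraints d m A b (\<lambda>i. z i + s * w i) \<subset> slack_constraints d m A b z"
      using polytope_move_to_facet[OF less.prems w(1) tight] by blast
    have "card (slack_constraints d m A b (\<lambda>i. z i + s * w i)) < card (slack_constraints d m A b z)"
      using s(3) by (rule psubset_card_mono[rotated]) (simp add: slack_constraints_def)
    then obtain e where "e \<in> extreme_pts (polytope d m A b)" "ip d c e \<le> ip d c (\<lambda>i. z i + s * w i)"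
      using less.hyps s(2) by blast
    moreover have "ip d c (\<lambda>i. z i + s * w i) \<le> ip d c z"
      using s(1) w(4) by (simp add: ip_add_scaled mult_nonneg_nonpos)
    ultimately show ?thesis by (meson order_trans)
  qed
qed

section \<open>Peeling\<close>

lemma summable_peeling_series: "summable (\<lambda>k::nat. (real k + 1) powr \<beta> * exp (- (real k)\<^sup>2))"
proof (rule summable_comparison_test_bigo)
  show "summable (\<lambda>k. norm (exp (-1) ^ k :: real))"
    by (simp add: summable_geometric)
  show "(\<lambda>k::nat. (real k + 1) powr \<beta> * exp (- (real k)\<^sup>2)) \<in> O(\<lambda>k. exp (-1) ^ k)"
    by real_asymp
qed

lemma ennreal_le_peeling_sum:
  fixes T :: "real \<Rightarrow> bool"
  assumes "0 < u" "0 \<le> L" "0 \<le> h" "h \<le> L * e" "0 < h \<Longrightarrow> T h"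
    and T_mono: "\<And>\<delta> \<delta>'. T \<delta> \<Longrightarrow> \<delta> \<le> \<delta>' \<Longrightarrow> T \<delta>'"
  shows "ennreal h \<le>
    (\<Sum>k. if T (L * (real k + 1) * u) \<and> real k * u \<le> e then ennreal (L * (real k + 1) * u) else 0)"
proof (cases "h = 0")
  case True
  then show ?thesis by simp
next
  case False
  then have "0 < h" "0 < L * e" using assms(3,4) by linarith+
  then have "0 < e" using assms(2) by (simp add: zero_less_mult_iff)
  define k where "k = nat \<lfloor>e / u\<rfloor>"
  have "real k = \<lfloor>e / u\<rfloor>" using \<open>0 < e\<close> \<open>0 < u\<close> by (simp add: k_def)
  then have "real k \<le> e / u" "e / u < real k + 1" by linarith+
  then have k: "real k * u \<le> e" "e \<le> (real k + 1) * u"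
    using \<open>0 < u\<close> by (simp_all add: pos_le_divide_eq pos_divide_less_eq less_imp_le)
  have "h \<le> L * (real k + 1) * u"
    using assms(4) mult_left_mono[OF k(2) assms(2)] by (simp add: mult.assoc)
  then have "T (L * (real k + 1) * u)" using T_mono assms(5) \<open>0 < h\<close> by blast
  with k(1) \<open>h \<le> L * (real k + 1) * u\<close> show ?thesis
    by (intro order_trans[OF _ sum_le_suminf[of _ "{k}"]]) (auto intro: ennreal_leI)
qed

lemma nn_integral_peeling_le:
  fixes e :: "'d \<Rightarrow> 'x \<Rightarrow> real" and T :: "nat \<Rightarrow> 'x \<Rightarrow> bool" and \<delta> q r :: "nat \<Rightarrow> ennreal"
  assumes "pair_sigma_finite PD PX"
    and e: "(\<lambda>Dx. e (fst Dx) (snd Dx)) \<in> borel_measurable (PD \<Otimes>\<^sub>M PX)"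
    and T: "\<And>k. {x \<in> space PX. T k x} \<in> sets PX"
    and tail: "AE x in PX. \<forall>k. emeasure PD {D \<in> space PD. t k \<le> e D x} \<le> q k"
    and noise: "\<And>k. emeasure PX {x \<in> space PX. T k x} \<le> r k"
  shows "(\<integral>\<^sup>+D. \<integral>\<^sup>+x. (\<Sum>k. if T k x \<and> t k \<le> e D x then \<delta> k else 0) \<partial>PX \<partial>PD)
    \<le> (\<Sum>k. \<delta> k * q k * r k)"
proof -
  interpret pair_sigma_finite PD PX by fact
  define G where "G k Dx = (if T k (snd Dx) \<and> t k \<le> e (fst Dx) (snd Dx) then \<delta> k else 0)" for k Dx
  have "Measurable.pred (PD \<Otimes>\<^sub>M PX) (\<lambda>Dx. T k (snd Dx))" for k
    by (rule measurable_compose[OF measurable_snd]) (use T[of k] in \<open>simp add: pred_def\<close>)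
  moreover have "Measurable.pred (PD \<Otimes>\<^sub>M PX) (\<lambda>Dx. t k \<le> e (fst Dx) (snd Dx))" for k
    using e by measurable
  ultimately have G: "G k \<in> borel_measurable (PD \<Otimes>\<^sub>M PX)" for k
    unfolding G_def by measurable
  have inner: "(\<integral>\<^sup>+D. (\<Sum>k. G k (D, x)) \<partial>PD) \<le> (\<Sum>k. \<delta> k * q k * indicator {x \<in> space PX. T k x} x)"
    if x: "x \<in> space PX" and q: "\<forall>k. emeasure PD {D \<in> space PD. t k \<le> e D x} \<le> q k" for x
  proof -
    have G_x: "(\<lambda>D. G k (D, x)) \<in> borel_measurable PD" for k
      using measurable_compose[OF measurable_Pair2'[OF x] G] by (simp add: comp_def)
    have "(\<lambda>D. e D x) \<in> borel_measurable PD"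
      using measurable_compose[OF measurable_Pair2'[OF x] e] by (simp add: comp_def)
    then have F: "{D \<in> space PD. t k \<le> e D x} \<in> sets PD" for k
      by measurable
    have "(\<integral>\<^sup>+D. (\<Sum>k. G k (D, x)) \<partial>PD) = (\<Sum>k. \<integral>\<^sup>+D. G k (D, x) \<partial>PD)"
      using G_x by (rule nn_integral_suminf)
    also have "\<dots> = (\<Sum>k. \<delta> k * indicator {x \<in> space PX. T k x} x * emeasure PD {D \<in> space PD. t k \<le> e D x})"
      using x by (subst nn_integral_cmult_indicator[OF F, symmetric])
        (auto intro!: suminf_cong nn_integral_cong simp: G_def indicator_def)
    also have "\<dots> \<le> (\<Sum>k. \<delta> k * indicator {x \<in> space PX. T k x} x * q k)"
      using q by (intro suminf_le mult_left_mono) auto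
    also have "\<dots> = (\<Sum>k. \<delta> k * q k * indicator {x \<in> space PX. T k x} x)"
      by (simp add: mult_ac)
    finally show ?thesis .
  qed
  have "(\<integral>\<^sup>+D. \<integral>\<^sup>+x. (\<Sum>k. G k (D, x)) \<partial>PX \<partial>PD) = (\<integral>\<^sup>+x. \<integral>\<^sup>+D. (\<Sum>k. G k (D, x)) \<partial>PD \<partial>PX)"
    using G by (intro Fubini[symmetric] borel_measurable_suminf_order) auto
  also have "\<dots> \<le> (\<integral>\<^sup>+x. (\<Sum>k. \<delta> k * q k * indicator {x \<in> space PX. T k x} x) \<partial>PX)"
    using tail by (intro nn_integral_mono_AE) (rule AE_mp, auto intro!: AE_I2 inner)
  also have "\<dots> = (\<Sum>k. \<delta> k * q k * emeasure PX {x \<in> space PX. T k x})"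
    using T by (simp add: nn_integral_suminf nn_integral_cmult_indicator)
  also have "\<dots> \<le> (\<Sum>k. \<delta> k * q k * r k)"
    using noise by (intro suminf_le mult_left_mono) auto
  finally show ?thesis by (simp add: G_def)
qed

lemma subgaussian_tail_on_grid:
  assumes "prob_space PD" "0 < c"
    and tail: "\<And>\<delta>. 0 < \<delta> \<Longrightarrow>
      AE x in PX. measure PD {D \<in> space PD. \<delta> \<le> e D x} \<le> C1 * exp (- c * \<delta>\<^sup>2)"
  shows "AE x in PX. \<forall>k::nat.
    emeasure PD {D \<in> space PD. real k * (1 / sqrt c) \<le> e D x} \<le> ennreal (max 1 C1 * exp (- (real k)\<^sup>2))"
proof (subst AE_all_countable, intro allI)
  interpret prob_space PD by fact
  fix k :: nat
  show "AE x in PX. emeasure PD {D \<in> space PD. real k * (1 / sqrt c) \<le> e D x}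
      \<le> ennreal (max 1 C1 * exp (- (real k)\<^sup>2))"
  proof (cases "k = 0")
    case True
    \<comment> \<open>the hypothesis says nothing at \<open>\<delta> = 0\<close>; the trivial bound 1 is why \<open>max 1 C1\<close> appears\<close>
    then show ?thesis by (simp add: emeasure_eq_measure ennreal_leI order_trans[OF prob_le_1])
  next
    case False
    then have "0 < real k * (1 / sqrt c)" using \<open>0 < c\<close> by simp
    from tail[OF this] show ?thesis
    proof (rule AE_mp, intro AE_I2 impI)
      fix x
      assume "measure PD {D \<in> space PD. real k * (1 / sqrt c) \<le> e D x}
        \<le> C1 * exp (- c * (real k * (1 / sqrt c))\<^sup>2)"
      also have "- c * (real k * (1 / sqrt c))\<^sup>2 = - (real k)\<^sup>2"
        using \<open>0 < c\<close> by (simp add: power_mult_distrib power_divide)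
      also have "C1 * exp (- (real k)\<^sup>2) \<le> max 1 C1 * exp (- (real k)\<^sup>2)"
        by (intro mult_right_mono) auto
      finally show "emeasure PD {D \<in> space PD. real k * (1 / sqrt c) \<le> e D x}
        \<le> ennreal (max 1 C1 * exp (- (real k)\<^sup>2))"
        by (simp add: emeasure_eq_measure ennreal_leI)
    qed
  qed
qed

lemma ennreal_integral_le_nn_integral:
  fixes f :: "'a \<Rightarrow> real"
  assumes "\<And>x. 0 \<le> f x"
  shows "ennreal (integral\<^sup>L M f) \<le> (\<integral>\<^sup>+x. ennreal (f x) \<partial>M)"
proof (cases "integrable M f")
  case True
  then show ?thesis using nn_integral_eq_integral[OF True] assms by simp
next
  case False
  then show ?thesis by (simp add: not_integrable_integral_eq)
qed

lemma integral_integral_le_of_nn_integral: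
  fixes h :: "'d \<Rightarrow> 'x \<Rightarrow> real"
  assumes "\<And>D x. 0 \<le> h D x" "0 \<le> r"
    and "(\<integral>\<^sup>+D. \<integral>\<^sup>+x. ennreal (h D x) \<partial>PX \<partial>PD) \<le> ennreal r"
  shows "(\<integral>D. \<integral>x. h D x \<partial>PX \<partial>PD) \<le> r"
proof (rule integral_real_bounded[OF assms(2)])
  have "(\<integral>\<^sup>+D. ennreal (\<integral>x. h D x \<partial>PX) \<partial>PD) \<le> (\<integral>\<^sup>+D. \<integral>\<^sup>+x. ennreal (h D x) \<partial>PX \<partial>PD)"
    using assms(1) by (intro nn_integral_mono ennreal_integral_le_nn_integral)
  then show "(\<integral>\<^sup>+D. ennreal (\<integral>x. h D x \<partial>PX) \<partial>PD) \<le> ennreal r"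
    using assms(3) by (rule order_trans)
qed

section \<open>The plug-in decision and the gap\<close>

lemma optval_eq_minimum:
  assumes "e \<in> Z" "\<forall>z\<in>Z. ip d c e \<le> ip d c z"
  shows "optval d Z c = ip d c e"
  unfolding optval_def by (rule cInf_eq_minimum) (use assms in auto)

text \<open>The event \<open>0 < \<Delta> \<le> \<delta>\<close> of the noise condition (\<open>gap_pos_le_iff_near_tie\<close>), written
  through the finitely many extreme points so that it is visibly Borel in the cost vector.\<close>

definition near_tie :: "nat \<Rightarrow> (nat \<Rightarrow> real) set \<Rightarrow> real \<Rightarrow> (nat \<Rightarrow> real) \<Rightarrow> bool" where
  "near_tie d E \<delta> c \<longleftrightarrow>
     (\<exists>e\<in>E. (\<exists>e'\<in>E. ip d c e' < ip d c e) \<and> (\<forall>e'\<in>E. ip d c e \<le> ip d c e' + \<delta>))"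

lemma near_tie_mono: "near_tie d E \<delta> c \<Longrightarrow> \<delta> \<le> \<delta>' \<Longrightarrow> near_tie d E \<delta>' c"
  unfolding near_tie_def by force

lemma borel_measurable_ip [measurable]: "(\<lambda>c. ip d c e) \<in> borel_measurable borel"
  unfolding ip_def by measurable

lemma pred_near_tie:
  assumes "finite E"
  shows "Measurable.pred borel (near_tie d E \<delta>)"
proof -
  have le: "Measurable.pred borel (\<lambda>c. ip d c e \<le> ip d c e' + \<delta>)" for e e'
    unfolding pred_def by (intro borel_measurable_le) measurable
  show ?thesis
    unfolding near_tie_def by (intro pred_intros_finite(3,4) pred_intros_logic(3) assms le) measurable
qed

locale bounded_polytope =
  fixes d m :: nat and A :: "nat \<Rightarrow> nat \<Rightarrow> real" and b :: "nat \<Rightarrow> real" and B :: real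
    and zs :: "(nat \<Rightarrow> real) list"
  assumes bounded: "\<forall>z\<in>polytope d m A b. nrm d z \<le> B"
    and nonempty: "polytope d m A b \<noteq> {}"
    and set_zs: "set zs = extreme_pts (polytope d m A b)"
begin

abbreviation "Z \<equiv> polytope d m A b"
abbreviation "E \<equiv> set zs"

lemma bound_nonneg: "0 \<le> B"
  using nonempty bounded nrm_nonneg by (meson all_not_in_conv order_trans)

lemma extreme_subset: "E \<subseteq> Z"
  using set_zs unfolding extreme_pts_def by auto

lemma extreme_le: "z \<in> Z \<Longrightarrow> \<exists>e\<in>E. ip d c e \<le> ip d c z"
  using polytope_extreme_point_le[OF bounded] set_zs by auto

lemma extreme_ge: "z \<in> Z \<Longrightarrow> \<exists>e\<in>E. ip d c z \<le> ip d c e"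
  using extreme_le[of z "\<lambda>i. - c i"] by (auto simp: ip_uminus_left)

lemma optval_attained: "\<exists>e\<in>E. e \<in> opt_set d Z c \<and> ip d c e = optval d Z c"
proof -
  obtain z where "z \<in> Z" using nonempty by blast
  then obtain e1 where "e1 \<in> E" using extreme_le[of z c] by blast
  then have "Min ((\<lambda>e. ip d c e) ` E) \<in> (\<lambda>e. ip d c e) ` E"
    by (intro Min_in) auto
  then obtain e where e: "e \<in> E" "Min ((\<lambda>e. ip d c e) ` E) = ip d c e"
    by (rule imageE)
  have minimal: "\<forall>z\<in>Z. ip d c e \<le> ip d c z"
  proof
    fix z assume z: "z \<in> Z"
    obtain e' where "e' \<in> E" "ip d c e' \<le> ip d c z"
      using extreme_le[OF z] by blast
    moreover have "ip d c e \<le> ip d c e'"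
      unfolding e(2)[symmetric] using \<open>e' \<in> E\<close> by (intro Min_le) auto
    ultimately show "ip d c e \<le> ip d c z" by linarith
  qed
  have "e \<in> Z" using e(1) extreme_subset by blast
  then have "e \<in> opt_set d Z c" "ip d c e = optval d Z c"
    using minimal optval_eq_minimum[of e Z d c] by (simp_all add: opt_set_def)
  then show ?thesis using e(1) by blast
qed

lemma optval_le: "z \<in> Z \<Longrightarrow> optval d Z c \<le> ip d c z"
  using optval_attained[of c] unfolding opt_set_def by force

lemma mem_opt_set_iff: "z \<in> opt_set d Z c \<longleftrightarrow> z \<in> Z \<and> ip d c z \<le> optval d Z c"
  using optval_attained[of c] optval_le[of z c] unfolding opt_set_def by force

lemma near_tie_iff:
  "near_tie d E \<delta> c \<longleftrightarrow> (\<exists>e\<in>E. optval d Z c < ip d c e \<and> ip d c e \<le> optval d Z c + \<delta>)"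
proof -
  obtain e0 where e0: "e0 \<in> E" "ip d c e0 = optval d Z c"
    using optval_attained by blast
  have "optval d Z c \<le> ip d c e" if "e \<in> E" for e
    using optval_le extreme_subset that by blast
  then show ?thesis
    unfolding near_tie_def using e0 by (smt (verit, best))
qed

lemma gap_pos_le_iff:
  "0 < gap d Z c \<and> gap d Z c \<le> \<delta> \<longleftrightarrow>
     (\<exists>e\<in>E. optval d Z c < ip d c e \<and> ip d c e \<le> optval d Z c + \<delta>)"
proof (cases "opt_set d Z c = Z")
  case True
  have "ip d c e \<le> optval d Z c" if "e \<in> E" for e
    using that extreme_subset True mem_opt_set_iff by blast
  then show ?thesis by (force simp: gap_def True)
next
  case False
  define N where "N = extreme_pts Z - opt_set d Z c"
  have N_eq: "N = {e \<in> E. optval d Z c < ip d c e}"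
    using extreme_subset set_zs by (auto simp: N_def mem_opt_set_iff)
  obtain z where "z \<in> Z" "z \<notin> opt_set d Z c"
    using False unfolding opt_set_def by blast
  then have "optval d Z c < ip d c z" by (simp add: mem_opt_set_iff)
  then have "N \<noteq> {}"
    using extreme_ge[OF \<open>z \<in> Z\<close>, of c] by (force simp: N_eq)
  moreover have "finite N" by (simp add: N_eq)
  ultimately have "gap d Z c = Min ((\<lambda>e. ip d c e) ` N) - optval d Z c"
    and "optval d Z c < Min ((\<lambda>e. ip d c e) ` N)"
    and "Min ((\<lambda>e. ip d c e) ` N) \<le> optval d Z c + \<delta> \<longleftrightarrow>
      (\<exists>e\<in>N. ip d c e \<le> optval d Z c + \<delta>)"
    using False unfolding gap_def N_def[symmetric]
    by (simp_all add: cInf_eq_Min Min_gr_iff Min_le_iff) (simp add: N_eq)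
  then show ?thesis by (auto simp: N_eq)
qed

lemma gap_pos_le_iff_near_tie: "0 < gap d Z c \<and> gap d Z c \<le> \<delta> \<longleftrightarrow> near_tie d E \<delta> c"
  by (simp only: gap_pos_le_iff near_tie_iff)

lemma plugin_mem: "plugin d Z zs c \<in> E" "plugin d Z zs c \<in> opt_set d Z c"
proof -
  have "filter (\<lambda>z. z \<in> opt_set d Z c) zs \<noteq> []"
    using optval_attained[of c] by (auto simp: filter_empty_conv)
  then have "plugin d Z zs c \<in> set (filter (\<lambda>z. z \<in> opt_set d Z c) zs)"
    unfolding plugin_def by (rule hd_in_set)
  then show "plugin d Z zs c \<in> E" "plugin d Z zs c \<in> opt_set d Z c" by auto
qed

lemma plugin_regret_eq:
  assumes "\<pi> \<in> opt_set d Z c"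
  shows "ip d c (plugin d Z zs c' - \<pi>) = ip d c (plugin d Z zs c') - optval d Z c"
  using assms optval_le[of \<pi> c] by (simp add: ip_diff_right mem_opt_set_iff)

lemma plugin_regret_nonneg:
  "\<pi> \<in> opt_set d Z c \<Longrightarrow> 0 \<le> ip d c (plugin d Z zs c' - \<pi>)"
  using plugin_mem(1)[of c'] extreme_subset optval_le by (force simp: plugin_regret_eq)

lemma plugin_regret_near_tie:
  assumes "\<pi> \<in> opt_set d Z c" "0 < ip d c (plugin d Z zs c' - \<pi>)"
  shows "near_tie d E (ip d c (plugin d Z zs c' - \<pi>)) c"
  using assms plugin_mem(1)[of c'] by (auto simp: near_tie_iff plugin_regret_eq)

lemma plugin_regret_le:
  assumes "\<pi> \<in> opt_set d Z c"
  shows "ip d c (plugin d Z zs c' - \<pi>) \<le> 2 * B * nrm d (c' - c)"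
proof -
  define z where "z = plugin d Z zs c'"
  have z: "z \<in> Z" "z \<in> opt_set d Z c'"
    using plugin_mem extreme_subset unfolding z_def by auto
  have \<pi>: "\<pi> \<in> Z" using assms by (simp add: mem_opt_set_iff)
  have "ip d c (z - \<pi>) \<le> ip d c (z - \<pi>) - ip d c' (z - \<pi>)"
    using z(2) \<pi> by (simp add: ip_diff_right opt_set_def)
  also have "\<dots> = ip d (c - c') (z - \<pi>)"
    unfolding ip_def sum_subtractf[symmetric] by (rule sum.cong) (auto simp: algebra_simps)
  also have "\<dots> \<le> nrm d (c - c') * nrm d (z - \<pi>)"
    by (rule ip_le_nrm_mult)
  also have "\<dots> \<le> nrm d (c' - c) * (2 * B)"
  proof -
    have "nrm d z \<le> B" "nrm d \<pi> \<le> B"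
      using bounded z(1) \<pi> by auto
    then have "nrm d (z - \<pi>) \<le> 2 * B"
      using nrm_diff_le[of d z \<pi>] by linarith
    then show ?thesis
      by (simp add: nrm_diff_commute[of d c c'] mult_left_mono nrm_nonneg)
  qed
  finally show ?thesis by (simp add: z_def mult.commute)
qed

lemma plugin_regret_le_peeling_sum:
  assumes "\<pi> \<in> opt_set d Z c" "0 < u"
  shows "ennreal (ip d c (plugin d Z zs c' - \<pi>))
    \<le> (\<Sum>k. if near_tie d E (2 * B * (real k + 1) * u) c \<and> real k * u \<le> nrm d (c' - c)
           then ennreal (2 * B * (real k + 1) * u) else 0)"
  using bound_nonneg
  by (intro ennreal_le_peeling_sum[OF \<open>0 < u\<close>] plugin_regret_nonneg[OF assms(1)]
      plugin_regret_le[OF assms(1)] plugin_regret_near_tie[OF assms(1)])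
    (auto intro: near_tie_mono)

end

section \<open>The regret bound\<close>

lemma noise_rhs_nonneg: "0 \<le> noise_rhs \<alpha> \<gamma> B \<delta>"
  by (simp add: noise_rhs_def)

lemma noise_rhs_scale:
  assumes "0 < B" "0 < t" "0 \<le> \<gamma>"
  shows "noise_rhs \<alpha> \<gamma> B (B * t) = noise_rhs \<alpha> \<gamma> 1 1 * t powr \<alpha>"
  using assms by (simp add: noise_rhs_def powr_mult)

lemma peeling_series_sum:
  assumes "0 < B" "0 < u" "0 \<le> K" "0 \<le> \<gamma>"
  shows "(\<Sum>k. ennreal (2 * B * (real k + 1) * u) * ennreal (K * exp (- (real k)\<^sup>2))
              * ennreal (noise_rhs \<alpha> \<gamma> B (2 * B * (real k + 1) * u)))
    = ennreal ((2 * u) powr (1 + \<alpha>) * K * noise_rhs \<alpha> \<gamma> 1 1 * B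
               * (\<Sum>k. (real k + 1) powr (1 + \<alpha>) * exp (- (real k)\<^sup>2)))"
proof -
  define c where "c = (2 * u) powr (1 + \<alpha>) * K * noise_rhs \<alpha> \<gamma> 1 1 * B"
  have "c \<ge> 0" using assms by (simp add: c_def noise_rhs_nonneg)
  have summand: "2 * B * (real k + 1) * u * (K * exp (- (real k)\<^sup>2))
      * noise_rhs \<alpha> \<gamma> B (2 * B * (real k + 1) * u)
    = c * ((real k + 1) powr (1 + \<alpha>) * exp (- (real k)\<^sup>2))" for k
  proof -
    define t where "t = 2 * u * (real k + 1)"
    have "0 < t" using assms(2) by (simp add: t_def)
    have "2 * B * (real k + 1) * u = B * t" by (simp add: t_def)
    moreover have "t * t powr \<alpha> = (2 * u) powr (1 + \<alpha>) * (real k + 1) powr (1 + \<alpha>)"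
      using \<open>0 < t\<close> assms(2) by (simp add: powr_add powr_mult t_def)
    ultimately show ?thesis
      using noise_rhs_scale[OF assms(1) \<open>0 < t\<close> assms(4)] by (simp add: c_def algebra_simps)
  qed
  have sums: "(\<lambda>k. c * ((real k + 1) powr (1 + \<alpha>) * exp (- (real k)\<^sup>2)))
      sums (c * (\<Sum>k. (real k + 1) powr (1 + \<alpha>) * exp (- (real k)\<^sup>2)))"
    by (intro sums_mult summable_sums summable_peeling_series)
  have summand_ennreal: "ennreal (2 * B * (real k + 1) * u) * ennreal (K * exp (- (real k)\<^sup>2))
      * ennreal (noise_rhs \<alpha> \<gamma> B (2 * B * (real k + 1) * u))
    = ennreal (c * ((real k + 1) powr (1 + \<alpha>) * exp (- (real k)\<^sup>2)))" for k
  proof -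
    have "0 \<le> 2 * B * (real k + 1) * u" "0 \<le> K * exp (- (real k)\<^sup>2)"
      using assms by simp_all
    then show ?thesis
      by (simp add: ennreal_mult'[symmetric] summand[symmetric])
  qed
  show ?thesis
    unfolding summand_ennreal c_def[symmetric]
    by (rule suminf_ennreal_eq[OF _ sums]) (use \<open>c \<ge> 0\<close> in simp)
qed

lemma peeling_width_powr:
  assumes "0 < c"
  shows "(2 / sqrt c) powr (1 + \<alpha>) = 2 powr (1 + \<alpha>) * c powr (- (1 + \<alpha>) / 2)"
proof -
  have "2 / sqrt c = 2 * c powr (- (1 / 2))"
    using assms by (simp add: powr_minus_divide powr_half_sqrt)
  then have "(2 / sqrt c) powr (1 + \<alpha>) = 2 powr (1 + \<alpha>) * c powr (- (1 / 2) * (1 + \<alpha>))"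
    using assms by (simp add: powr_mult powr_powr)
  also have "- (1 / 2) * (1 + \<alpha>) = - (1 + \<alpha>) / 2"
    by linarith
  finally show ?thesis .
qed

lemma borel_measurable_nrm_diff:
  assumes "f \<in> M \<rightarrow>\<^sub>M borel" "g \<in> M \<rightarrow>\<^sub>M (borel :: (nat \<Rightarrow> real) measure)"
  shows "(\<lambda>x. nrm d (f x - g x)) \<in> borel_measurable M"
proof -
  have "(\<lambda>x. f x i) \<in> borel_measurable M" "(\<lambda>x. g x i) \<in> borel_measurable M" for i
    using measurable_compose[OF assms(1) measurable_product_coordinates]
      measurable_compose[OF assms(2) measurable_product_coordinates] by auto
  then show ?thesis unfolding nrm_def by simp
qed

definition regret_const :: "real \<Rightarrow> real \<Rightarrow> real \<Rightarrow> real \<Rightarrow> real" where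
  "regret_const \<alpha> \<gamma> C1 C2 = 2 powr (1 + \<alpha>) * max 1 C1 * noise_rhs \<alpha> \<gamma> 1 1
     * (\<Sum>k. (real k + 1) powr (1 + \<alpha>) * exp (- (real k)\<^sup>2)) * C2 powr (- (1 + \<alpha>) / 2)"

lemma regret_const_nonneg: "0 \<le> regret_const \<alpha> \<gamma> C1 C2"
  unfolding regret_const_def
  by (intro mult_nonneg_nonneg suminf_nonneg summable_peeling_series) (auto simp: noise_rhs_nonneg)

lemma (in bounded_polytope) plugin_regret_bound:
  fixes PD :: "'d measure" and PX :: "'x measure" and fstar pistar :: "'x \<Rightarrow> nat \<Rightarrow> real"
    and fhat :: "'d \<Rightarrow> 'x \<Rightarrow> nat \<Rightarrow> real"
  assumes "prob_space PD" "prob_space PX" "0 \<le> \<gamma>" "0 < C2" "0 < a" "0 < B"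
    and fstar: "fstar \<in> PX \<rightarrow>\<^sub>M borel"
    and fhat: "(\<lambda>Dx. fhat (fst Dx) (snd Dx)) \<in> PD \<Otimes>\<^sub>M PX \<rightarrow>\<^sub>M borel"
    and pistar: "\<And>x. pistar x \<in> opt_set d Z (fstar x)"
    and noise: "\<And>\<delta>. 0 < \<delta> \<Longrightarrow>
      measure PX {x \<in> space PX. 0 < gap d Z (fstar x) \<and> gap d Z (fstar x) \<le> \<delta>} \<le> noise_rhs \<alpha> \<gamma> B \<delta>"
    and tail: "\<And>\<delta>. 0 < \<delta> \<Longrightarrow> AE x in PX.
      measure PD {D \<in> space PD. \<delta> \<le> nrm d (fhat D x - fstar x)} \<le> C1 * exp (- C2 * a * \<delta>\<^sup>2)"
  shows "(\<integral>D. \<integral>x. ip d (fstar x) (plugin d Z zs (fhat D x) - pistar x) \<partial>PX \<partial>PD)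
    \<le> regret_const \<alpha> \<gamma> C1 C2 * B * a powr (- (1 + \<alpha>) / 2)"
proof -
  interpret PD: prob_space PD by fact
  interpret PX: prob_space PX by fact
  have pair: "pair_sigma_finite PD PX" by unfold_locales
  define u where "u = 1 / sqrt (C2 * a)"
  define \<delta> where "\<delta> k = 2 * B * (real k + 1) * u" for k :: nat
  define e where "e D x = nrm d (fhat D x - fstar x)" for D x
  have "0 < u" using assms by (simp add: u_def)
  have e_meas: "(\<lambda>Dx. e (fst Dx) (snd Dx)) \<in> borel_measurable (PD \<Otimes>\<^sub>M PX)"
    unfolding e_def using fhat measurable_compose[OF measurable_snd fstar]
    by (rule borel_measurable_nrm_diff)
  have near_tie_sets: "{x \<in> space PX. near_tie d E (\<delta> k) (fstar x)} \<in> sets PX" for k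
    using measurable_compose[OF fstar pred_near_tie[of E]] by (simp add: pred_def comp_def)
  have tail_grid: "AE x in PX. \<forall>k. emeasure PD {D \<in> space PD. real k * u \<le> e D x}
      \<le> ennreal (max 1 C1 * exp (- (real k)\<^sup>2))"
    unfolding u_def e_def using assms tail
    by (intro subgaussian_tail_on_grid) (simp_all add: mult.assoc)
  have noise_grid: "emeasure PX {x \<in> space PX. near_tie d E (\<delta> k) (fstar x)}
      \<le> ennreal (noise_rhs \<alpha> \<gamma> B (\<delta> k))" for k
    using noise[of "\<delta> k"] \<open>0 < u\<close> \<open>0 < B\<close>
    by (simp add: gap_pos_le_iff_near_tie PX.emeasure_eq_measure \<delta>_def ennreal_leI)
  have "(\<integral>\<^sup>+D. \<integral>\<^sup>+x. ennreal (ip d (fstar x) (plugin d Z zs (fhat D x) - pistar x)) \<partial>PX \<partial>PD)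
      \<le> (\<integral>\<^sup>+D. \<integral>\<^sup>+x. (\<Sum>k. if near_tie d E (\<delta> k) (fstar x) \<and> real k * u \<le> e D x
          then ennreal (\<delta> k) else 0) \<partial>PX \<partial>PD)"
    unfolding \<delta>_def e_def
    by (intro nn_integral_mono plugin_regret_le_peeling_sum pistar \<open>0 < u\<close>)
  also have "\<dots> \<le> (\<Sum>k. ennreal (\<delta> k) * ennreal (max 1 C1 * exp (- (real k)\<^sup>2))
      * ennreal (noise_rhs \<alpha> \<gamma> B (\<delta> k)))"
    using pair e_meas near_tie_sets tail_grid noise_grid by (rule nn_integral_peeling_le)
  also have "\<dots> = ennreal ((2 * u) powr (1 + \<alpha>) * max 1 C1 * noise_rhs \<alpha> \<gamma> 1 1 * B
      * (\<Sum>k. (real k + 1) powr (1 + \<alpha>) * exp (- (real k)\<^sup>2)))"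
    unfolding \<delta>_def using assms \<open>0 < u\<close> by (intro peeling_series_sum) auto
  also have "\<dots> = ennreal (regret_const \<alpha> \<gamma> C1 C2 * B * a powr (- (1 + \<alpha>) / 2))"
    using assms by (simp add: u_def peeling_width_powr powr_mult regret_const_def mult_ac)
  finally show ?thesis
    using plugin_regret_nonneg[OF pistar] regret_const_nonneg \<open>0 < B\<close>
    by (intro integral_integral_le_of_nn_integral) auto
qed

lemma prob_space_distr_fst:
  assumes "prob_space M" "sets M = sets (borel \<Otimes>\<^sub>M borel)"
  shows "prob_space (distr M borel fst)"
proof -
  have "fst \<in> M \<rightarrow>\<^sub>M borel"
    using measurable_fst measurable_cong_sets[OF assms(2)[symmetric] refl] by blast
  then show ?thesis by (rule prob_space.prob_space_distr[OF assms(1)])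
qed

theorem theorem8:
  fixes \<alpha> \<gamma> C1 C2 :: real
  assumes "\<alpha> \<ge> 0" and "\<gamma> \<ge> 0" and "C1 > 0" and "C2 > 0"
  shows "\<exists>C::real. \<forall>(p::nat) (d::nat) (n::nat) (a::real) (B::real) (m::nat)
      (A::nat \<Rightarrow> nat \<Rightarrow> real) (b::nat \<Rightarrow> real) (zs::(nat \<Rightarrow> real) list)
      (M::((nat \<Rightarrow> real) \<times> (nat \<Rightarrow> real)) measure)
      (fstar::(nat \<Rightarrow> real) \<Rightarrow> (nat \<Rightarrow> real))
      (fhat::(nat \<Rightarrow> (nat \<Rightarrow> real) \<times> (nat \<Rightarrow> real)) \<Rightarrow> (nat \<Rightarrow> real) \<Rightarrow> (nat \<Rightarrow> real))
      (pistar::(nat \<Rightarrow> real) \<Rightarrow> (nat \<Rightarrow> real)).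
    (let Z = polytope d m A b; PX = distr M borel fst; PD = PiM {..<n} (\<lambda>_. M) in
     a > 0 \<and> B > 0 \<and>
     prob_space M \<and> sets M = sets (borel \<Otimes>\<^sub>M borel) \<and>
     (AE xy in M. fst xy \<in> vspace p \<and> snd xy \<in> vspace d \<and> nrm d (snd xy) \<le> 1) \<and>
     is_cond_exp_Y d M fstar \<and>
     Z \<noteq> {} \<and> (\<forall>z\<in>Z. nrm d z \<le> B) \<and>
     distinct zs \<and> set zs = extreme_pts Z \<and>
     (\<forall>x. pistar x \<in> opt_set d Z (fstar x)) \<and>
     (\<forall>\<delta>>0. measure PX {x \<in> space PX. 0 < gap d Z (fstar x) \<and> gap d Z (fstar x) \<le> \<delta>}
              \<le> noise_rhs \<alpha> \<gamma> B \<delta>) \<and>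
     (\<forall>D x. fhat D x \<in> vspace d) \<and>
     (\<lambda>Dx. fhat (fst Dx) (snd Dx)) \<in> (PD \<Otimes>\<^sub>M PX) \<rightarrow>\<^sub>M borel \<and>
     (\<forall>\<delta>>0. AE x in PX.
        measure PD {D \<in> space PD. nrm d (fhat D x - fstar x) \<ge> \<delta>} \<le> C1 * exp (- C2 * a * \<delta>^2))
     \<longrightarrow>
     (\<integral>D. (\<integral>x. ip d (fstar x) (plugin d Z zs (fhat D x) - pistar x) \<partial>PX) \<partial>PD)
       \<le> C * B * a powr (- (1 + \<alpha>) / 2))"
  unfolding Let_def
  by (intro exI[of _ "regret_const \<alpha> \<gamma> C1 C2"] allI impI, elim conjE,
      rule bounded_polytope.plugin_regret_bound)
    (use assms in \<open>auto simp: bounded_polytope_def is_cond_exp_Y_def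
      intro!: prob_space_PiM prob_space_distr_fst\<close>)

end
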